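(* Assume $E_{l,m}$ is toric, i.e. $q-p$ divides $m$. Then the morphism $\psi=\gamma\times\eta_{-p,-1}\times\eta_{q,1}:\mathcal H\to E_{l,m}\times\mathbb P^1\times\mathbb P^1$ is bijective onto its image.
   Context: Let $l=p/q \in \mathbb Q \cap (0,1]$ with $\gcd(p,q)=1$ and $m \in \mathbb N$. Let $H_{q-p}=\{X_0^{q-p}=X_1X_4-X_2X_3\} \subset \mathbb C^5$, where $\mathbb C^5=V(0)\oplus V(1)\oplus V(1)$ with coordinates $X_0,\dots,X_4$ and $SL(2)$ acts by left multiplication on the matrix $\begin{pmatrix} X_1 & X_3\\ X_2 & X_4\end{pmatrix}$. Let $G_0=\{\mathrm{diag}(t,t^{-p},t^{-p},t^q,t^q): t\in\mathbb C^*\}$ and $G_m=\{\mathrm{diag}(1,\zeta^{-1},\zeta^{-1},\zeta,\zeta): \zeta^m=1\}$. Let $E_{l,m}=H_{q-p}/\!\!/(G_0\times G_m)$. Identify $\mathrm{Irr}(G_0\times G_m)$ with $\mathbb Z\times\mathbb Z/m\mathbb Z$ and let $h(n,d)=1$ for all $(n,d)$ (the Hilbert function of the general fibers of the quotient morphism). Let $\mathcal H=\mathrm{Hilb}^{G_0\times G_m}_h(H_{q-p})$ be the invariant Hilbert scheme and $\gamma:\mathcal H\to E_{l,m}$ the Hilbert–Chow morphism. The weight space of weight $(-p,-1)$ of $\mathbb C[H_{q-p}]$ is generated over the invariants by $F_{-p,-1}=\langle X_1,X_2\rangle$, and that of weight $(q,1)$ by $F_{q,1}=\langle X_3,X_4\rangle$.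 For $[Z]\in\mathcal H$ with ideal $I_Z$, $\eta_{-p,-1}([Z])\in\mathrm{Gr}(1,F_{-p,-1}^{\vee})\cong\mathbb P^1$ is the one-dimensional quotient $F_{-p,-1}/\mathrm{Ker}$, where $\mathrm{Ker}$ is the kernel of the natural map $F_{-p,-1}\to$ (weight $(-p,-1)$ part of $\mathbb C[Z]$), i.e. the line of linear forms $s_1X_1+s_2X_2$ lying in $I_Z$; the isomorphism with $\mathbb P^1$ is $\langle t_0X_1^\vee+t_1X_2^\vee\rangle\mapsto[t_0:t_1]$. Similarly $\eta_{q,1}:\mathcal H\to\mathrm{Gr}(1,F_{q,1}^{\vee})\cong\mathbb P^1$ using $X_3,X_4$. These are $SL(2)$-equivariant. *)

theory Defs
  imports "HOL-Analysis.Analysis" "HOL-Library.Poly_Mapping" "HOL-Library.Numeral_Type"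
begin

text \<open>Polynomial ring C[X_0,...,X_4]: exponent vectors indexed by the 5-element type 5.\<close>
type_synonym mono5 = "5 \<Rightarrow>\<^sub>0 nat"
type_synonym poly5 = "mono5 \<Rightarrow>\<^sub>0 complex"

definition Var :: "5 \<Rightarrow> poly5" where
  "Var i = Poly_Mapping.single (Poly_Mapping.single i 1) 1"

definition const5 :: "complex \<Rightarrow> poly5" where
  "const5 c = Poly_Mapping.single 0 c"

definition hyp_eq :: "nat \<Rightarrow> nat \<Rightarrow> poly5" where
  "hyp_eq p q = Var 0 ^ (q - p) - (Var 1 * Var 4 - Var 2 * Var 3)"

text \<open>Weight of a monomial for G_0 x G_m, identified with Z x Z/mZ
  (second component represented by its residue in {0..<m}).
  X_0 has weight (1,0), X_1,X_2 weight (-p,-1), X_3,X_4 weight (q,1).\<close>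
definition wt :: "nat \<Rightarrow> nat \<Rightarrow> nat \<Rightarrow> mono5 \<Rightarrow> int \<times> int" where
  "wt p q m a =
     (int (Poly_Mapping.lookup a (0::5)) - int p * int (Poly_Mapping.lookup a (1::5) + Poly_Mapping.lookup a (2::5)) + int q * int (Poly_Mapping.lookup a (3::5) + Poly_Mapping.lookup a (4::5)),
      (int (Poly_Mapping.lookup a (3::5) + Poly_Mapping.lookup a (4::5)) - int (Poly_Mapping.lookup a (1::5) + Poly_Mapping.lookup a (2::5))) mod int m)"

definition weights :: "nat \<Rightarrow> (int \<times> int) set" where
  "weights m = {(n, d). 0 \<le> d \<and> d < int m}"

definition weight_comp :: "nat \<Rightarrow> nat \<Rightarrow> nat \<Rightarrow> int \<times> int \<Rightarrow> poly5 \<Rightarrow> poly5" where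
  "weight_comp p q m w g = Poly_Mapping.mapp (\<lambda>a c. if wt p q m a = w then c else 0) g"

definition weight_space :: "nat \<Rightarrow> nat \<Rightarrow> nat \<Rightarrow> int \<times> int \<Rightarrow> poly5 set" where
  "weight_space p q m w = {g. \<forall>a \<in> Poly_Mapping.keys g. wt p q m a = w}"

definition is_ideal5 :: "poly5 set \<Rightarrow> bool" where
  "is_ideal5 J \<longleftrightarrow> 0 \<in> J \<and> (\<forall>x\<in>J. \<forall>y\<in>J. x + y \<in> J) \<and> (\<forall>r. \<forall>x\<in>J. r * x \<in> J)"

text \<open>Closed points of the invariant Hilbert scheme Hilb^{G_0 x G_m}_h(H_{q-p}), h = 1:
  ideals J of C[X_0..X_4] containing the equation of H_{q-p} (i.e. ideals of C[H_{q-p}]),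
  stable under G_0 x G_m (= homogeneous for the Z x Z/mZ grading), such that every weight
  space of C[Z] = C[X]/J is one-dimensional.\<close>
definition hilb_point :: "nat \<Rightarrow> nat \<Rightarrow> nat \<Rightarrow> poly5 set \<Rightarrow> bool" where
  "hilb_point p q m J \<longleftrightarrow>
     is_ideal5 J \<and> hyp_eq p q \<in> J \<and>
     (\<forall>g\<in>J. \<forall>w. weight_comp p q m w g \<in> J) \<and>
     (\<forall>w\<in>weights m. \<exists>v\<in>weight_space p q m w. v \<notin> J \<and>
         (\<forall>u\<in>weight_space p q m w. \<exists>c. u - const5 c * v \<in> J))"

text \<open>Hilbert-Chow morphism: gamma([Z]) is the point of E_{l,m} = Spec C[H]^G given by the
  maximal ideal J \<inter> (invariants).\<close>
definition gamma :: "nat \<Rightarrow> nat \<Rightarrow> nat \<Rightarrow> poly5 set \<Rightarrow> poly5 set" where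
  "gamma p q m J = J \<inter> weight_space p q m (0, 0)"

text \<open>eta_{-p,-1}([Z]) as the line in F^\<or> = C^2 (coordinates t0, t1 w.r.t. X_1^\<or>, X_2^\<or>)
  annihilating the kernel {s1 X_1 + s2 X_2 \<in> J}; similarly eta_{q,1} with X_3, X_4.\<close>
definition eta_neg :: "poly5 set \<Rightarrow> (complex \<times> complex) set" where
  "eta_neg J = {(t0, t1). \<forall>s1 s2. const5 s1 * Var 1 + const5 s2 * Var 2 \<in> J \<longrightarrow> t0 * s1 + t1 * s2 = 0}"

definition eta_pos :: "poly5 set \<Rightarrow> (complex \<times> complex) set" where
  "eta_pos J = {(t0, t1). \<forall>s1 s2. const5 s1 * Var 3 + const5 s2 * Var 4 \<in> J \<longrightarrow> t0 * s1 + t1 * s2 = 0}"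

end

theory Submission
  imports Defs
begin

text \<open>Let \<open>K = J\<^sub>1 \<inter> J\<^sub>2\<close>. Since the two points have the same image under
  \<open>\<eta>\<^sub>-\<^sub>p\<^sub>,\<^sub>-\<^sub>1\<close> and \<open>\<eta>\<^sub>q\<^sub>,\<^sub>1\<close>, modulo \<open>K\<close> the variables \<open>X\<^sub>1, X\<^sub>2\<close> are multiples of one of
  them, \<open>u\<close>, and \<open>X\<^sub>3, X\<^sub>4\<close> multiples of one of them, \<open>v\<close>; so every monomial is congruent
  to a multiple of some \<open>z\<^sup>a u\<^sup>s v\<^sup>t\<close> with \<open>z = X\<^sub>0\<close>. The hypersurface equation becomes
  \<open>z\<^sup>k \<equiv> \<delta> u v\<close> with \<open>k = q - p\<close>, and since the images under the Hilbert-Chow morphism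
  agree, the invariant monomials \<open>z\<^sup>p\<^sup>m u\<^sup>m\<close> and \<open>u\<^sup>q\<^sup>n v\<^sup>p\<^sup>n\<close> (where \<open>m = k n\<close>: here
  the toric hypothesis enters) are congruent to constants. With these three relations, a case
  distinction on \<open>\<delta> = 0\<close> shows that any two monomials of equal weight are proportional
  modulo \<open>K\<close>. Each weight space of \<open>\<complex>[X]/J\<^sub>1\<close> is spanned by a monomial outside \<open>J\<^sub>1\<close>, so a
  homogeneous element of \<open>J\<^sub>1\<close> is congruent modulo \<open>K\<close> to a multiple of that monomial which
  lies in \<open>J\<^sub>1\<close>, hence is zero. Thus \<open>J\<^sub>1 \<subseteq> K \<subseteq> J\<^sub>2\<close>, and symmetrically.\<close>

lemma five_cases: "(x::5) = 0 \<or> x = 1 \<or> x = 2 \<or> x = 3 \<or> x = 4"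
proof (induct x rule: bit1.induct)
  case (1 z)
  then have "z = 0 \<or> z = 1 \<or> z = 2 \<or> z = 3 \<or> z = 4" by auto
  then show ?case by auto
qed

section \<open>Ideals and congruence up to scalars\<close>

lemma is_ideal5_zero: "is_ideal5 K \<Longrightarrow> 0 \<in> K"
  by (simp add: is_ideal5_def)

lemma is_ideal5_add: "is_ideal5 K \<Longrightarrow> x \<in> K \<Longrightarrow> y \<in> K \<Longrightarrow> x + y \<in> K"
  by (simp add: is_ideal5_def)

lemma is_ideal5_mult: "is_ideal5 K \<Longrightarrow> x \<in> K \<Longrightarrow> r * x \<in> K"
  by (simp add: is_ideal5_def)

lemma is_ideal5_mult_right: "is_ideal5 K \<Longrightarrow> x \<in> K \<Longrightarrow> x * r \<in> K"
  by (metis is_ideal5_mult mult.commute)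

lemma is_ideal5_uminus: "is_ideal5 K \<Longrightarrow> x \<in> K \<Longrightarrow> - x \<in> K"
  using is_ideal5_mult[of K x "-1"] by simp

lemma is_ideal5_diff: "is_ideal5 K \<Longrightarrow> x \<in> K \<Longrightarrow> y \<in> K \<Longrightarrow> x - y \<in> K"
  using is_ideal5_add[of K x "- y"] is_ideal5_uminus[of K y] by simp

lemma is_ideal5_sum: "is_ideal5 K \<Longrightarrow> (\<And>x. x \<in> A \<Longrightarrow> f x \<in> K) \<Longrightarrow> sum f A \<in> K"
  by (induct A rule: infinite_finite_induct) (simp_all add: is_ideal5_zero is_ideal5_add)

lemma is_ideal5_Int: "is_ideal5 J1 \<Longrightarrow> is_ideal5 J2 \<Longrightarrow> is_ideal5 (J1 \<inter> J2)"
  by (simp add: is_ideal5_def)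

lemma const5_mult: "const5 (a * b) = const5 a * const5 b"
  by (simp add: const5_def mult_single)

lemma const5_one [simp]: "const5 1 = 1"
  by (simp add: const5_def)

lemma const5_zero [simp]: "const5 0 = 0"
  by (simp add: const5_def)

lemma const5_add: "const5 (a + b) = const5 a + const5 b"
  by (simp add: const5_def single_add)

lemma const5_uminus: "const5 (- a) = - const5 a"
  by (simp add: const5_def single_uminus)

lemma is_ideal5_const_mult_cancel:
  assumes "is_ideal5 K" "const5 c * x \<in> K" "c \<noteq> 0"
  shows "x \<in> K"
proof -
  have "const5 (inverse c) * (const5 c * x) \<in> K"
    using assms(1,2) by (rule is_ideal5_mult)
  then show ?thesis
    by (simp add: mult.assoc[symmetric] const5_mult[symmetric] assms(3))
qed

definition in_span_mod :: "poly5 set \<Rightarrow> poly5 \<Rightarrow> poly5 \<Rightarrow> bool" where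
  "in_span_mod K x y \<longleftrightarrow> (\<exists>c. x - const5 c * y \<in> K)"

definition comparable_mod :: "poly5 set \<Rightarrow> poly5 \<Rightarrow> poly5 \<Rightarrow> bool" where
  "comparable_mod K x y \<longleftrightarrow> in_span_mod K x y \<or> in_span_mod K y x"

lemma in_span_modI: "x - const5 c * y \<in> K \<Longrightarrow> in_span_mod K x y"
  unfolding in_span_mod_def by blast

lemma in_span_mod_zero_iff: "in_span_mod K x 0 \<longleftrightarrow> x \<in> K"
  by (simp add: in_span_mod_def)

lemma in_span_mod_if_mem: "x \<in> K \<Longrightarrow> in_span_mod K x y"
  using in_span_modI[of x 0 y] by simp

lemma comparable_mod_sym: "comparable_mod K x y \<Longrightarrow> comparable_mod K y x"
  by (auto simp: comparable_mod_def)

context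
  fixes K :: "poly5 set"
  assumes K: "is_ideal5 K"
begin

lemma in_span_mod_refl: "in_span_mod K x x"
  using in_span_modI[of x 1 x] K by (simp add: is_ideal5_zero)

lemma in_span_mod_cong:
  assumes "x - x' \<in> K" "in_span_mod K x' y"
  shows "in_span_mod K x y"
proof -
  obtain c where "x' - const5 c * y \<in> K"
    using assms(2) by (auto simp: in_span_mod_def)
  then have "(x - x') + (x' - const5 c * y) \<in> K"
    using assms(1) by (rule is_ideal5_add[OF K, rotated])
  then show ?thesis
    by (auto intro: in_span_modI)
qed

lemma in_span_mod_const_mult:
  assumes "in_span_mod K x y"
  shows "in_span_mod K (const5 d * x) y"
proof -
  obtain c where "x - const5 c * y \<in> K"
    using assms by (auto simp: in_span_mod_def)
  then have "const5 d * (x - const5 c * y) \<in> K"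
    by (rule is_ideal5_mult[OF K])
  then have "const5 d * x - const5 (d * c) * y \<in> K"
    by (simp add: const5_mult algebra_simps)
  then show ?thesis
    by (rule in_span_modI)
qed

lemma in_span_mod_trans:
  assumes "in_span_mod K x y" "in_span_mod K y z"
  shows "in_span_mod K x z"
proof -
  obtain c where c: "x - const5 c * y \<in> K"
    using assms(1) by (auto simp: in_span_mod_def)
  obtain d where "const5 c * y - const5 d * z \<in> K"
    using in_span_mod_const_mult[OF assms(2), of c] by (auto simp: in_span_mod_def)
  then have "(x - const5 c * y) + (const5 c * y - const5 d * z) \<in> K"
    using c by (rule is_ideal5_add[OF K, rotated])
  then show ?thesis
    by (auto intro: in_span_modI)
qed

lemma in_span_mod_add:
  assumes "in_span_mod K x z" "in_span_mod K y z"
  shows "in_span_mod K (x + y) z"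
proof -
  obtain c d where "x - const5 c * z \<in> K" "y - const5 d * z \<in> K"
    using assms by (auto simp: in_span_mod_def)
  then have "(x - const5 c * z) + (y - const5 d * z) \<in> K"
    by (rule is_ideal5_add[OF K])
  then have "x + y - const5 (c + d) * z \<in> K"
    by (simp add: const5_add algebra_simps)
  then show ?thesis
    by (rule in_span_modI)
qed

lemma in_span_mod_diff:
  assumes "in_span_mod K x z" "in_span_mod K y z"
  shows "in_span_mod K (x - y) z"
  using in_span_mod_add[OF assms(1) in_span_mod_const_mult[OF assms(2), of "-1"]]
  by (simp add: const5_uminus)

lemma in_span_mod_sum:
  "(\<And>a. a \<in> A \<Longrightarrow> in_span_mod K (f a) z) \<Longrightarrow> in_span_mod K (sum f A) z"
  by (induct A rule: infinite_finite_induct)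
    (simp_all add: in_span_mod_add in_span_mod_if_mem is_ideal5_zero K)

lemma in_span_mod_mult:
  assumes "in_span_mod K x y" "in_span_mod K x' y'"
  shows "in_span_mod K (x * x') (y * y')"
proof -
  obtain c c' where c: "x - const5 c * y \<in> K" and c': "x' - const5 c' * y' \<in> K"
    using assms by (auto simp: in_span_mod_def)
  have "x * x' - const5 (c * c') * (y * y') = (x - const5 c * y) * x' + const5 c * y * (x' - const5 c' * y')"
    by (simp add: const5_mult algebra_simps)
  also have "\<dots> \<in> K"
    using c c' K by (simp add: is_ideal5_add is_ideal5_mult is_ideal5_mult_right)
  finally show ?thesis
    by (rule in_span_modI)
qed

lemma in_span_mod_power: "in_span_mod K x y \<Longrightarrow> in_span_mod K (x ^ n) (y ^ n)"
  by (induct n) (simp_all add: in_span_mod_refl in_span_mod_mult)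

lemma in_span_mod_mult_left: "in_span_mod K x y \<Longrightarrow> in_span_mod K (w * x) (w * y)"
  by (simp add: in_span_mod_mult in_span_mod_refl)

lemma in_span_mod_mult_invariant_power:
  "in_span_mod K x 1 \<Longrightarrow> in_span_mod K (y * x ^ j) y"
  using in_span_mod_mult[OF in_span_mod_refl in_span_mod_power, of x 1 y j] by simp

lemma in_span_mod_swap:
  assumes "x - const5 c * y \<in> K" "c \<noteq> 0"
  shows "in_span_mod K y x"
proof -
  have "const5 (- inverse c) * (x - const5 c * y) \<in> K"
    using assms(1) by (rule is_ideal5_mult[OF K])
  then have "y - const5 (inverse c) * x \<in> K"
    using assms(2) by (simp add: const5_mult[symmetric] const5_uminus algebra_simps)
  then show ?thesis
    by (rule in_span_modI)
qed

lemma in_span_mod_swap_if_notin: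
  assumes "in_span_mod K x y" "x \<notin> K"
  shows "in_span_mod K y x"
proof -
  obtain c where c: "x - const5 c * y \<in> K"
    using assms(1) by (auto simp: in_span_mod_def)
  with assms(2) have "c \<noteq> 0"
    by auto
  with c show ?thesis
    by (rule in_span_mod_swap)
qed

lemma comparable_mod_if_mem: "x \<in> K \<Longrightarrow> comparable_mod K x y"
  by (simp add: comparable_mod_def in_span_mod_if_mem)

lemma comparable_mod_transfer:
  assumes "in_span_mod K x x'" "in_span_mod K x' x" "in_span_mod K y y'" "in_span_mod K y' y"
    and "comparable_mod K x' y'"
  shows "comparable_mod K x y"
  using assms unfolding comparable_mod_def by (meson in_span_mod_trans)

lemma in_span_mod_if_comparable_reductions:
  assumes "in_span_mod K x x'" "in_span_mod K y y'" "comparable_mod K x' y'" "y \<notin> K"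
  shows "in_span_mod K x y"
  using assms(3) unfolding comparable_mod_def
proof
  assume "in_span_mod K x' y'"
  moreover have "in_span_mod K y' y"
    using in_span_mod_swap_if_notin assms(2,4) by blast
  ultimately show ?thesis
    using assms(1) in_span_mod_trans by blast
next
  assume "in_span_mod K y' x'"
  then have "in_span_mod K y x'"
    using assms(2) in_span_mod_trans by blast
  then have "in_span_mod K x' y"
    using in_span_mod_swap_if_notin assms(4) by blast
  then show ?thesis
    using assms(1) in_span_mod_trans by blast
qed

end

section \<open>Monomials\<close>

definition mono :: "mono5 \<Rightarrow> poly5" where
  "mono a = Poly_Mapping.single a 1"

lemma mono_add: "mono (a + b) = mono a * mono b"
  by (simp add: mono_def mult_single)

lemma Var_eq_mono: "Var i = mono (Poly_Mapping.single i 1)"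
  by (simp add: Var_def mono_def)

lemma Var_power: "Var i ^ n = mono (Poly_Mapping.single i n)"
proof (induct n)
  case 0
  then show ?case by (simp add: mono_def)
next
  case (Suc n)
  have "Var i ^ Suc n = mono (Poly_Mapping.single i 1) * mono (Poly_Mapping.single i n)"
    using Suc by (simp add: Var_eq_mono)
  also have "\<dots> = mono (Poly_Mapping.single i (Suc n))"
    by (simp add: mono_add[symmetric] single_add[symmetric])
  finally show ?case .
qed

lemma mono_eq_Var_prod:
  "mono a = Var 0 ^ Poly_Mapping.lookup a 0 * Var 1 ^ Poly_Mapping.lookup a 1 *
     Var 2 ^ Poly_Mapping.lookup a 2 * Var 3 ^ Poly_Mapping.lookup a 3 * Var 4 ^ Poly_Mapping.lookup a 4"
proof -
  have "a = Poly_Mapping.single 0 (Poly_Mapping.lookup a 0) + Poly_Mapping.single 1 (Poly_Mapping.lookup a 1)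
      + Poly_Mapping.single 2 (Poly_Mapping.lookup a 2) + Poly_Mapping.single 3 (Poly_Mapping.lookup a 3)
      + Poly_Mapping.single 4 (Poly_Mapping.lookup a 4)"
  proof (rule poly_mapping_eqI)
    fix x :: 5
    show "Poly_Mapping.lookup a x = Poly_Mapping.lookup (Poly_Mapping.single 0 (Poly_Mapping.lookup a 0)
      + Poly_Mapping.single 1 (Poly_Mapping.lookup a 1) + Poly_Mapping.single 2 (Poly_Mapping.lookup a 2)
      + Poly_Mapping.single 3 (Poly_Mapping.lookup a 3) + Poly_Mapping.single 4 (Poly_Mapping.lookup a 4)) x"
      using five_cases[of x] by (auto simp: lookup_add lookup_single)
  qed
  then show ?thesis
    by (metis mono_add Var_power)
qed

lemma mono_eq_Var_power_mult:
  assumes "n \<le> Poly_Mapping.lookup a i"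
  shows "\<exists>r. mono a = Var i ^ n * r"
proof -
  have "a = Poly_Mapping.single i n + (a - Poly_Mapping.single i n)"
    by (rule poly_mapping_eqI) (use assms in \<open>auto simp: lookup_add lookup_minus lookup_single when_def\<close>)
  then show ?thesis
    by (metis mono_add Var_power)
qed

lemma is_ideal5_mono_if_Var_power:
  "is_ideal5 J \<Longrightarrow> Var i ^ n \<in> J \<Longrightarrow> n \<le> Poly_Mapping.lookup a i \<Longrightarrow> mono a \<in> J"
  by (metis mono_eq_Var_power_mult is_ideal5_mult_right)

lemma poly5_eq_sum_terms:
  "(g::poly5) = (\<Sum>a\<in>Poly_Mapping.keys g. const5 (Poly_Mapping.lookup g a) * mono a)"
proof (rule poly_mapping_eqI)
  fix x
  have "Poly_Mapping.lookup (\<Sum>a\<in>Poly_Mapping.keys g. const5 (Poly_Mapping.lookup g a) * mono a) x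
     = (\<Sum>a\<in>Poly_Mapping.keys g. (Poly_Mapping.lookup g a when a = x))"
    by (simp add: lookup_sum const5_def mono_def mult_single lookup_single)
  also have "\<dots> = Poly_Mapping.lookup g x"
    by (cases "x \<in> Poly_Mapping.keys g") (auto simp: when_def in_keys_iff)
  finally show "Poly_Mapping.lookup g x =
      Poly_Mapping.lookup (\<Sum>a\<in>Poly_Mapping.keys g. const5 (Poly_Mapping.lookup g a) * mono a) x"
    by simp
qed

lemma in_span_mod_if_terms:
  assumes "is_ideal5 K" "\<And>a. a \<in> Poly_Mapping.keys g \<Longrightarrow> in_span_mod K (mono a) y"
  shows "in_span_mod K g y"
  by (subst poly5_eq_sum_terms)
    (use assms in \<open>auto intro!: in_span_mod_sum in_span_mod_const_mult\<close>)

lemma is_ideal5_if_terms: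
  "is_ideal5 K \<Longrightarrow> (\<And>a. a \<in> Poly_Mapping.keys g \<Longrightarrow> mono a \<in> K) \<Longrightarrow> g \<in> K"
  using in_span_mod_if_terms[of K g 0] by (simp add: in_span_mod_zero_iff)

section \<open>Weights\<close>

definition exp_weight :: "nat \<Rightarrow> nat \<Rightarrow> nat \<Rightarrow> nat \<Rightarrow> nat \<Rightarrow> nat \<Rightarrow> int \<times> int" where
  "exp_weight p q m a s t = (int a - int p * int s + int q * int t, (int t - int s) mod int m)"

lemma wt_eq_exp_weight:
  "wt p q m a = exp_weight p q m (Poly_Mapping.lookup a 0)
     (Poly_Mapping.lookup a 1 + Poly_Mapping.lookup a 2) (Poly_Mapping.lookup a 3 + Poly_Mapping.lookup a 4)"
  by (simp add: wt_def exp_weight_def)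

lemma wt_in_weights: "0 < m \<Longrightarrow> wt p q m a \<in> weights m"
  by (simp add: weights_def wt_def)

lemma mono_in_weight_space: "mono a \<in> weight_space p q m (wt p q m a)"
  by (simp add: weight_space_def mono_def)

lemma const5_in_weight_space: "const5 c \<in> weight_space p q m (0, 0)"
  by (simp add: weight_space_def const5_def wt_def)

lemma weight_space_diff:
  "f \<in> weight_space p q m w \<Longrightarrow> g \<in> weight_space p q m w \<Longrightarrow> f - g \<in> weight_space p q m w"
  using keys_diff[of f g] by (auto simp: weight_space_def)

lemma lookup_weight_comp:
  "Poly_Mapping.lookup (weight_comp p q m w g) a = (if wt p q m a = w then Poly_Mapping.lookup g a else 0)"
  by (auto simp: weight_comp_def lookup_mapp when_def in_keys_iff)

lemma weight_comp_in_weight_space: "weight_comp p q m w g \<in> weight_space p q m w"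
  by (auto simp: weight_space_def in_keys_iff lookup_weight_comp split: if_splits)

lemma sum_weight_comp: "(\<Sum>w\<in>wt p q m ` Poly_Mapping.keys g. weight_comp p q m w g) = g"
proof (rule poly_mapping_eqI)
  fix x
  have "Poly_Mapping.lookup (\<Sum>w\<in>wt p q m ` Poly_Mapping.keys g. weight_comp p q m w g) x
      = (\<Sum>w\<in>wt p q m ` Poly_Mapping.keys g. (if wt p q m x = w then Poly_Mapping.lookup g x else 0))"
    by (simp add: lookup_sum lookup_weight_comp)
  also have "\<dots> = Poly_Mapping.lookup g x"
    by (auto simp: in_keys_iff)
  finally show "Poly_Mapping.lookup (\<Sum>w\<in>wt p q m ` Poly_Mapping.keys g. weight_comp p q m w g) x
      = Poly_Mapping.lookup g x" .
qed

section \<open>Points of the invariant Hilbert scheme\<close>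

lemma hilb_point_is_ideal5: "hilb_point p q m J \<Longrightarrow> is_ideal5 J"
  by (simp add: hilb_point_def)

lemma hilb_point_hyp_eq: "hilb_point p q m J \<Longrightarrow> hyp_eq p q \<in> J"
  by (simp add: hilb_point_def)

lemma hilb_point_weight_comp: "hilb_point p q m J \<Longrightarrow> g \<in> J \<Longrightarrow> weight_comp p q m w g \<in> J"
  unfolding hilb_point_def by blast

lemma hilb_point_weight_space_generator:
  "hilb_point p q m J \<Longrightarrow> w \<in> weights m \<Longrightarrow>
     \<exists>v\<in>weight_space p q m w. v \<notin> J \<and> (\<forall>u\<in>weight_space p q m w. in_span_mod J u v)"
  by (simp add: hilb_point_def in_span_mod_def)

lemma hilb_point_weight_space_one_dim:
  assumes H: "hilb_point p q m J" and w: "w \<in> weights m"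
    and x: "x \<in> weight_space p q m w" and y: "y \<in> weight_space p q m w" and "x \<notin> J"
  shows "in_span_mod J y x"
proof -
  have J: "is_ideal5 J"
    using H by (rule hilb_point_is_ideal5)
  obtain v where "\<forall>u\<in>weight_space p q m w. in_span_mod J u v"
    using hilb_point_weight_space_generator[OF H w] by blast
  then have "in_span_mod J y v" "in_span_mod J x v"
    using x y by blast+
  with \<open>x \<notin> J\<close> show ?thesis
    by (meson J in_span_mod_swap_if_notin in_span_mod_trans)
qed

lemma hilb_point_mono_notin:
  assumes H: "hilb_point p q m J" and "w \<in> weights m"
  obtains b where "wt p q m b = w" "mono b \<notin> J"
proof -
  obtain v where v: "v \<in> weight_space p q m w" "v \<notin> J"
    using hilb_point_weight_space_generator[OF assms] by blast
  then obtain b where "b \<in> Poly_Mapping.keys v" "mono b \<notin> J"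
    using is_ideal5_if_terms[OF hilb_point_is_ideal5[OF H]] by blast
  with v(1) show ?thesis
    using that by (auto simp: weight_space_def)
qed

lemma hilb_point_invariant_in_span_one:
  assumes H: "hilb_point p q m J" and "0 < m" and g: "g \<in> weight_space p q m (0, 0)"
  shows "in_span_mod J g 1"
proof -
  have "(0, 0) \<in> weights m"
    using \<open>0 < m\<close> by (simp add: weights_def)
  moreover have "1 \<notin> J"
  proof
    assume "1 \<in> J"
    then have "x \<in> J" for x
      using is_ideal5_mult[OF hilb_point_is_ideal5[OF H], of 1 x] by simp
    then show False
      using hilb_point_weight_space_generator[OF H \<open>(0, 0) \<in> weights m\<close>] by blast
  qed
  ultimately show ?thesis
    using hilb_point_weight_space_one_dim[OF H _ _ g] const5_in_weight_space[of 1] by auto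
qed

lemma gamma_eq_invariant_in_span_one:
  assumes H1: "hilb_point p q m J1" and H2: "hilb_point p q m J2" and "0 < m"
    and "gamma p q m J1 = gamma p q m J2" and g: "g \<in> weight_space p q m (0, 0)"
  shows "in_span_mod (J1 \<inter> J2) g 1"
proof -
  obtain c where c: "g - const5 c \<in> J1"
    using hilb_point_invariant_in_span_one[OF H1 \<open>0 < m\<close> g] by (auto simp: in_span_mod_def)
  moreover have "g - const5 c \<in> weight_space p q m (0, 0)"
    using weight_space_diff[OF g const5_in_weight_space] .
  ultimately have "g - const5 c \<in> J2"
    using assms(4) by (auto simp: gamma_def)
  with c show ?thesis
    by (auto intro: in_span_modI[where c = c])
qed

lemma Var_in_weight_space:
  "i = 1 \<or> i = 2 \<Longrightarrow> Var i \<in> weight_space p q m (- int p, (-1) mod int m)"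
  "j = 3 \<or> j = 4 \<Longrightarrow> Var j \<in> weight_space p q m (int q, 1 mod int m)"
  by (auto simp: Var_eq_mono weight_space_def mono_def wt_def lookup_single)

lemma hilb_point_X1_or_X2_notin:
  assumes H: "hilb_point p q m J" and "0 < p" "0 < m"
  shows "Var 1 \<notin> J \<or> Var 2 \<notin> J"
proof (rule ccontr)
  assume "\<not> ?thesis"
  then have X12: "Var 1 ^ 1 \<in> J" "Var 2 ^ 1 \<in> J"
    by simp_all
  have "(- int p, (-1) mod int m) \<in> weights m"
    using \<open>0 < m\<close> by (simp add: weights_def)
  then obtain b where b: "wt p q m b = (- int p, (-1) mod int m)" "mono b \<notin> J"
    using hilb_point_mono_notin[OF H] by blast
  have "1 \<le> Poly_Mapping.lookup b 1 \<or> 1 \<le> Poly_Mapping.lookup b 2"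
  proof (rule ccontr)
    assume "\<not> ?thesis"
    then have "Poly_Mapping.lookup b 1 = 0" "Poly_Mapping.lookup b 2 = 0"
      by auto
    then have "int (Poly_Mapping.lookup b 0) + int q * int (Poly_Mapping.lookup b 3 + Poly_Mapping.lookup b 4)
        = - int p"
      using b(1) unfolding wt_def by simp
    moreover have "0 \<le> int q * int (Poly_Mapping.lookup b 3 + Poly_Mapping.lookup b 4)"
      by simp
    ultimately show False
      using \<open>0 < p\<close> by linarith
  qed
  then have "mono b \<in> J"
    using is_ideal5_mono_if_Var_power[OF hilb_point_is_ideal5[OF H]] X12 by blast
  with b(2) show False ..
qed

text \<open>If \<open>X\<^sub>3, X\<^sub>4 \<in> J\<close> then also \<open>X\<^sub>0\<^sup>q\<^sup>-\<^sup>p \<in> J\<close> by the equation of the hypersurface,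
  and every monomial of weight \<open>(q, 1)\<close> is divisible by one of these three.\<close>

lemma hilb_point_X3_or_X4_notin:
  assumes H: "hilb_point p q m J" and "0 < m"
  shows "Var 3 \<notin> J \<or> Var 4 \<notin> J"
proof (rule ccontr)
  have J: "is_ideal5 J"
    using H by (rule hilb_point_is_ideal5)
  assume "\<not> ?thesis"
  then have X34: "Var 3 ^ 1 \<in> J" "Var 4 ^ 1 \<in> J"
    by simp_all
  have "Var 1 * Var 4 - Var 2 * Var 3 \<in> J"
    using X34 J by (simp add: is_ideal5_diff is_ideal5_mult)
  then have X0: "hyp_eq p q + (Var 1 * Var 4 - Var 2 * Var 3) \<in> J"
    by (rule is_ideal5_add[OF J hilb_point_hyp_eq[OF H]])
  then have X0: "Var 0 ^ (q - p) \<in> J"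
    by (simp add: hyp_eq_def)
  have "(int q, 1 mod int m) \<in> weights m"
    using \<open>0 < m\<close> by (simp add: weights_def)
  then obtain b where b: "wt p q m b = (int q, 1 mod int m)" "mono b \<notin> J"
    using hilb_point_mono_notin[OF H] by blast
  have "1 \<le> Poly_Mapping.lookup b 3 \<or> 1 \<le> Poly_Mapping.lookup b 4 \<or> q - p \<le> Poly_Mapping.lookup b 0"
  proof (rule ccontr)
    assume "\<not> ?thesis"
    then have "Poly_Mapping.lookup b 3 = 0" "Poly_Mapping.lookup b 4 = 0"
      "int (Poly_Mapping.lookup b 0) < int q"
      by auto
    moreover from this have "int (Poly_Mapping.lookup b 0)
        = int q + int p * int (Poly_Mapping.lookup b 1 + Poly_Mapping.lookup b 2)"
      using b(1) unfolding wt_def by simp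
    moreover have "0 \<le> int p * int (Poly_Mapping.lookup b 1 + Poly_Mapping.lookup b 2)"
      by simp
    ultimately show False
      by linarith
  qed
  then have "mono b \<in> J"
    using is_ideal5_mono_if_Var_power[OF J] X34 X0 by blast
  with b(2) show False ..
qed

definition eta_pair :: "5 \<Rightarrow> 5 \<Rightarrow> poly5 set \<Rightarrow> (complex \<times> complex) set" where
  "eta_pair i j J =
     {(t0, t1). \<forall>s1 s2. const5 s1 * Var i + const5 s2 * Var j \<in> J \<longrightarrow> t0 * s1 + t1 * s2 = 0}"

lemma eta_neg_eq_eta_pair: "eta_neg J = eta_pair 1 2 J"
  by (simp add: eta_neg_def eta_pair_def)

lemma eta_pos_eq_eta_pair: "eta_pos J = eta_pair 3 4 J"
  by (simp add: eta_pos_def eta_pair_def)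

lemma eta_pair_swap: "(t0, t1) \<in> eta_pair j i J \<longleftrightarrow> (t1, t0) \<in> eta_pair i j J"
  unfolding eta_pair_def by (auto simp: add.commute)

lemma eta_pair_if_relation:
  assumes J: "is_ideal5 J" and "Var i \<notin> J" and r: "Var j - const5 c * Var i \<in> J"
  shows "(1, c) \<in> eta_pair i j J"
    and "(t0, t1) \<in> eta_pair i j J \<Longrightarrow> const5 t1 * Var i - const5 t0 * Var j \<in> J"
proof -
  show "(1, c) \<in> eta_pair i j J"
    unfolding eta_pair_def
  proof clarsimp
    fix s1 s2
    assume "const5 s1 * Var i + const5 s2 * Var j \<in> J"
    then have "const5 s1 * Var i + const5 s2 * Var j - const5 s2 * (Var j - const5 c * Var i) \<in> J"
      using r J by (simp add: is_ideal5_diff is_ideal5_mult)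
    then have "const5 (s1 + c * s2) * Var i \<in> J"
      by (simp add: algebra_simps const5_mult const5_add)
    then show "s1 + c * s2 = 0"
      using is_ideal5_const_mult_cancel[OF J] \<open>Var i \<notin> J\<close> by blast
  qed
next
  assume t: "(t0, t1) \<in> eta_pair i j J"
  have "const5 (- c) * Var i + const5 1 * Var j \<in> J"
    using r by (simp add: const5_uminus algebra_simps)
  then have "t0 * (- c) + t1 * 1 = 0"
    using t unfolding eta_pair_def by blast
  then have "t1 = c * t0"
    by (simp add: algebra_simps)
  then have "const5 t1 * Var i - const5 t0 * Var j = const5 (- t0) * (Var j - const5 c * Var i)"
    by (simp add: algebra_simps const5_mult const5_uminus)
  also have "\<dots> \<in> J"
    using r J by (simp add: is_ideal5_mult)
  finally show "const5 t1 * Var i - const5 t0 * Var j \<in> J" .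
qed

lemma hilb_point_eta_pair:
  assumes H: "hilb_point p q m J" and w: "w \<in> weights m"
    and ij: "Var i \<in> weight_space p q m w" "Var j \<in> weight_space p q m w"
    and notin: "Var i \<notin> J \<or> Var j \<notin> J"
  shows "\<exists>t\<in>eta_pair i j J. t \<noteq> (0, 0)"
    and "(t0, t1) \<in> eta_pair i j J \<Longrightarrow> const5 t1 * Var i - const5 t0 * Var j \<in> J"
proof -
  have J: "is_ideal5 J"
    using H by (rule hilb_point_is_ideal5)
  have "(\<exists>t\<in>eta_pair i j J. t \<noteq> (0, 0)) \<and>
      (\<forall>t0 t1. (t0, t1) \<in> eta_pair i j J \<longrightarrow> const5 t1 * Var i - const5 t0 * Var j \<in> J)"
  proof (cases "Var i \<in> J")
    case False
    obtain c where "Var j - const5 c * Var i \<in> J"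
      using hilb_point_weight_space_one_dim[OF H w ij False] by (auto simp: in_span_mod_def)
    note rel = eta_pair_if_relation[OF J False this]
    have "(1::complex, c) \<noteq> (0, 0)"
      by simp
    with rel show ?thesis
      by blast
  next
    case True
    with notin have "Var j \<notin> J"
      by blast
    obtain c where "Var i - const5 c * Var j \<in> J"
      using hilb_point_weight_space_one_dim[OF H w ij(2,1) \<open>Var j \<notin> J\<close>] by (auto simp: in_span_mod_def)
    note rel = eta_pair_if_relation[OF J \<open>Var j \<notin> J\<close> this]
    have "(c, 1) \<in> eta_pair i j J"
      using rel(1) by (rule eta_pair_swap[THEN iffD1])
    moreover have "const5 t1 * Var i - const5 t0 * Var j \<in> J" if "(t0, t1) \<in> eta_pair i j J" for t0 t1
    proof -
      have "(t1, t0) \<in> eta_pair j i J"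
        using that by (rule eta_pair_swap[THEN iffD2])
      then have "const5 t0 * Var j - const5 t1 * Var i \<in> J"
        by (rule rel(2))
      then have "- (const5 t0 * Var j - const5 t1 * Var i) \<in> J"
        by (rule is_ideal5_uminus[OF J])
      then show ?thesis
        by simp
    qed
    moreover have "(c, 1::complex) \<noteq> (0, 0)"
      by simp
    ultimately show ?thesis
      by blast
  qed
  then show "\<exists>t\<in>eta_pair i j J. t \<noteq> (0, 0)"
    and "(t0, t1) \<in> eta_pair i j J \<Longrightarrow> const5 t1 * Var i - const5 t0 * Var j \<in> J"
    by blast+
qed

lemma hilb_points_common_linear_relation:
  assumes H1: "hilb_point p q m J1" and H2: "hilb_point p q m J2" and w: "w \<in> weights m"
    and ij: "Var i \<in> weight_space p q m w" "Var j \<in> weight_space p q m w"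
    and notin1: "Var i \<notin> J1 \<or> Var j \<notin> J1" and notin2: "Var i \<notin> J2 \<or> Var j \<notin> J2"
    and eq: "eta_pair i j J1 = eta_pair i j J2"
  shows "\<exists>u\<in>{Var i, Var j}. in_span_mod (J1 \<inter> J2) (Var i) u \<and> in_span_mod (J1 \<inter> J2) (Var j) u"
proof -
  have K: "is_ideal5 (J1 \<inter> J2)"
    using H1 H2 by (intro is_ideal5_Int hilb_point_is_ideal5)
  obtain t0 t1 where t: "(t0, t1) \<in> eta_pair i j J1" "(t0, t1) \<noteq> (0, 0)"
    using hilb_point_eta_pair(1)[OF H1 w ij notin1] by auto
  have "(t0, t1) \<in> eta_pair i j J2"
    using t(1) eq by simp
  then have r: "const5 t1 * Var i - const5 t0 * Var j \<in> J1 \<inter> J2"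
    using hilb_point_eta_pair(2)[OF H1 w ij notin1 t(1)] hilb_point_eta_pair(2)[OF H2 w ij notin2] by blast
  show ?thesis
  proof (cases "t0 = 0")
    case False
    have "- (const5 t1 * Var i - const5 t0 * Var j) \<in> J1 \<inter> J2"
      using K r by (rule is_ideal5_uminus)
    then have "const5 t0 * Var j - const5 t1 * Var i \<in> J1 \<inter> J2"
      by simp
    then have "in_span_mod (J1 \<inter> J2) (const5 t0 * Var j) (Var i)"
      by (rule in_span_modI)
    then have "in_span_mod (J1 \<inter> J2) (const5 (inverse t0) * (const5 t0 * Var j)) (Var i)"
      by (rule in_span_mod_const_mult[OF K])
    moreover have "const5 (inverse t0) * (const5 t0 * Var j) = Var j"
      using False by (simp add: mult.assoc[symmetric] const5_mult[symmetric])
    ultimately have "in_span_mod (J1 \<inter> J2) (Var j) (Var i)"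
      by simp
    then show ?thesis
      using in_span_mod_refl[OF K] by blast
  next
    case True
    then have "const5 t1 * Var i \<in> J1 \<inter> J2" "t1 \<noteq> 0"
      using r t(2) by simp_all
    then have "Var i \<in> J1 \<inter> J2"
      by (rule is_ideal5_const_mult_cancel[OF K])
    then have "in_span_mod (J1 \<inter> J2) (Var i) (Var j)"
      by (rule in_span_mod_if_mem)
    then show ?thesis
      using in_span_mod_refl[OF K] by blast
  qed
qed

lemma Var_monomial_in_weight_space:
  assumes "i = 1 \<or> i = 2" "j = 3 \<or> j = 4"
  shows "Var 0 ^ x * Var i ^ y * Var j ^ z \<in> weight_space p q m (exp_weight p q m x y z)"
proof -
  have "Var 0 ^ x * Var i ^ y * Var j ^ z =
      mono (Poly_Mapping.single 0 x + Poly_Mapping.single i y + Poly_Mapping.single j z)"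
    by (simp add: Var_power mono_add)
  moreover have "wt p q m (Poly_Mapping.single 0 x + Poly_Mapping.single i y + Poly_Mapping.single j z)
      = exp_weight p q m x y z"
    using assms by (auto simp: wt_eq_exp_weight lookup_add lookup_single)
  ultimately show ?thesis
    by (metis mono_in_weight_space)
qed

lemma mono_in_span_mod_reduced:
  assumes K: "is_ideal5 K"
    and "in_span_mod K (Var 1) u" "in_span_mod K (Var 2) u" "in_span_mod K (Var 3) v" "in_span_mod K (Var 4) v"
  shows "in_span_mod K (mono a) (Var 0 ^ Poly_Mapping.lookup a 0 *
    u ^ (Poly_Mapping.lookup a 1 + Poly_Mapping.lookup a 2) * v ^ (Poly_Mapping.lookup a 3 + Poly_Mapping.lookup a 4))"
proof -
  have "in_span_mod K (mono a) (Var 0 ^ Poly_Mapping.lookup a 0 * u ^ Poly_Mapping.lookup a 1 *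
    u ^ Poly_Mapping.lookup a 2 * v ^ Poly_Mapping.lookup a 3 * v ^ Poly_Mapping.lookup a 4)"
    unfolding mono_eq_Var_prod
    by (intro in_span_mod_mult[OF K] in_span_mod_power[OF K] in_span_mod_refl[OF K] assms(2-))
  then show ?thesis
    by (simp add: power_add mult_ac)
qed

section \<open>Arithmetic of exponent weights\<close>

lemma exp_weight_eq_iff:
  "exp_weight p q m a s t = exp_weight p q m a' s' t' \<longleftrightarrow>
     int a - int p * int s + int q * int t = int a' - int p * int s' + int q * int t' \<and>
     int m dvd (int t - int s) - (int t' - int s')"
  by (simp add: exp_weight_def mod_eq_dvd_iff)

lemma nat_dvd_diff_if_int_dvd:
  assumes "int m dvd int x' - int x" "x \<le> x'"
  shows "m dvd x' - x"
proof -
  have "int m dvd int (x' - x)"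
    using assms by simp
  then show ?thesis
    by (simp only: of_nat_dvd_iff)
qed

lemma exp_weight_u_only_eq:
  assumes "exp_weight p q m a s 0 = exp_weight p q m a' s' 0" "s \<le> s'"
  obtains j where "s' = s + m * j" "a' = a + p * m * j"
proof -
  have w: "int a - int p * int s = int a' - int p * int s'" "int m dvd int s' - int s"
    using assms(1) by (auto simp: exp_weight_eq_iff dvd_diff_commute)
  obtain j where "s' - s = m * j"
    using nat_dvd_diff_if_int_dvd[OF w(2) assms(2)] by (rule dvdE)
  then have j: "s' = s + m * j"
    using assms(2) by simp
  moreover have "int a' = int (a + p * m * j)"
    using w(1) j by (simp add: algebra_simps)
  then have "a' = a + p * m * j"
    by (simp only: of_nat_eq_iff)
  ultimately show thesis
    by (rule that)
qed

lemma exp_weight_v_only_eq: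
  assumes "exp_weight p q m a 0 t = exp_weight p q m a' 0 t'" "t \<le> t'"
  obtains j where "t' = t + m * j" "a = a' + q * m * j"
proof -
  have w: "int a + int q * int t = int a' + int q * int t'" "int m dvd int t' - int t"
    using assms(1) by (auto simp: exp_weight_eq_iff dvd_diff_commute)
  obtain j where "t' - t = m * j"
    using nat_dvd_diff_if_int_dvd[OF w(2) assms(2)] by (rule dvdE)
  then have j: "t' = t + m * j"
    using assms(2) by simp
  moreover have "int a = int (a' + q * m * j)"
    using w(1) j by (simp add: algebra_simps)
  then have "a = a' + q * m * j"
    by (simp only: of_nat_eq_iff)
  ultimately show thesis
    by (rule that)
qed

lemma exp_weight_u_v_eq:
  assumes "exp_weight p q m a s 0 = exp_weight p q m a' 0 t'" "q = p + k"
  obtains j where "s + t' = m * j" "a = a' + k * t' + p * m * j"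
proof -
  have w: "int a - int p * int s = int a' + int q * int t'" "int m dvd int (s + t')"
    using assms(1) by (auto simp: exp_weight_eq_iff dvd_diff_commute add.commute)
  obtain j where j: "s + t' = m * j"
    using w(2) by (metis of_nat_dvd_iff dvdE)
  have "int a = int (a' + k * t' + p * (s + t'))"
    using w(1) assms(2) by (simp add: algebra_simps)
  then have "a = a' + k * t' + p * m * j"
    unfolding j of_nat_eq_iff by (simp add: mult.assoc)
  with j show thesis
    by (rule that)
qed

text \<open>In the degenerate case \<open>z\<^sup>k \<in> K\<close> of the binomial relation only exponents of
  \<open>z\<close> below \<open>k\<close> matter.\<close>

lemma exp_weight_eq_small_z_exponent:
  assumes w: "exp_weight p q m a s t = exp_weight p q m a' s' t'"
    and "q = p + k" "k dvd m" "a < k" "a' < k"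
  shows "a = a'"
proof -
  have w1: "int a - int a' = int p * ((int s - int s') - (int t - int t')) - int k * (int t - int t')"
    using w \<open>q = p + k\<close> by (simp add: exp_weight_eq_iff algebra_simps)
  have "int k dvd (int t - int s) - (int t' - int s')"
    using w \<open>k dvd m\<close> by (auto simp: exp_weight_eq_iff intro: dvd_trans)
  then have "int k dvd (int s - int s') - (int t - int t')"
    by (simp add: dvd_diff_commute algebra_simps)
  then have "int k dvd int a - int a'"
    unfolding w1 by (metis dvd_diff dvd_mult dvd_triv_left)
  then have "a mod k = a' mod k"
    by (metis mod_eq_dvd_iff of_nat_eq_iff of_nat_mod)
  with assms(4,5) show ?thesis
    by simp
qed

lemma int_diff_eq_mult_cases:
  assumes "int x' - int x = int c * j"
  shows "0 \<le> j \<and> x' = x + c * nat j \<or> j < 0 \<and> x = x' + c * nat (- j)"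
proof (cases "0 \<le> j")
  case True
  then have "int x' = int (x + c * nat j)"
    using assms by simp
  with True show ?thesis
    by (simp only: of_nat_eq_iff) simp
next
  case False
  then have "int x = int (x' + c * nat (- j))"
    using assms by simp
  with False show ?thesis
    by (simp only: of_nat_eq_iff) simp
qed

lemma exp_weight_eq_same_z_exponent:
  assumes w: "exp_weight p q m a s t = exp_weight p q m a s' t'"
    and q: "q = p + k" "0 < k" and m: "m = k * n" and cop: "coprime p q"
  obtains j where "s' = s + q * n * j" "t' = t + p * n * j"
    | j where "s = s' + q * n * j" "t = t' + p * n * j"
proof -
  define ds dt where "ds = int s' - int s" and "dt = int t' - int t"
  have pq: "int p * ds = int q * dt" and md: "int m dvd dt - ds"
    using w by (auto simp: exp_weight_eq_iff ds_def dt_def algebra_simps dvd_diff_commute)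
  have copi: "coprime (int q) (int p)"
    using cop by (simp add: coprime_commute)
  have "int q dvd int p * ds"
    using pq by simp
  then have "int q dvd ds"
    by (simp add: coprime_dvd_mult_right_iff[OF copi])
  then obtain r where r: "ds = int q * r"
    by (rule dvdE)
  have "int q * dt = int q * (int p * r)"
    using pq r by (metis mult.left_commute)
  moreover have "int q \<noteq> 0"
    using q by simp
  ultimately have dt: "dt = int p * r"
    by simp
  have "dt - ds = - (int k * r)"
    using r dt q(1) by (simp add: algebra_simps)
  then have "int k * int n dvd int k * r"
    using md m by simp
  then have "int n dvd r"
    using q(2) by simp
  then obtain j where "r = int n * j"
    by (rule dvdE)
  then have s: "int s' - int s = int (q * n) * j" and t: "int t' - int t = int (p * n) * j"
    using r dt by (simp_all add: ds_def dt_def algebra_simps)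
  show thesis
  proof (cases "0 \<le> j")
    case True
    with int_diff_eq_mult_cases[OF s] int_diff_eq_mult_cases[OF t]
    have "s' = s + q * n * nat j" "t' = t + p * n * nat j"
      by auto
    then show thesis
      by (rule that(1))
  next
    case False
    with int_diff_eq_mult_cases[OF s] int_diff_eq_mult_cases[OF t]
    have "s = s' + q * n * nat (- j)" "t = t' + p * n * nat (- j)"
      by auto
    then show thesis
      by (rule that(2))
  qed
qed

section \<open>Monomials in three generators\<close>

text \<open>\<open>z\<close>, \<open>u\<close>, \<open>v\<close> stand for \<open>X\<^sub>0\<close> and the linear forms to which \<open>X\<^sub>1, X\<^sub>2\<close>
  resp. \<open>X\<^sub>3, X\<^sub>4\<close> reduce modulo \<open>K\<close>, and \<open>m div k\<close> is the \<open>n\<close> with \<open>m = k n\<close>.\<close>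

locale zuv_relations =
  fixes K :: "poly5 set" and z u v :: poly5 and p q m k :: nat and \<delta> :: complex
  assumes ideal: "is_ideal5 K"
    and k_pos: "0 < k" and q_eq: "q = p + k" and k_dvd_m: "k dvd m" and coprime_pq: "coprime p q"
    and binomial: "z ^ k - const5 \<delta> * (u * v) \<in> K"
    and invariant_u: "in_span_mod K (z ^ (p * m) * u ^ m) 1"
    and invariant_v: "in_span_mod K (u ^ (q * (m div k)) * v ^ (p * (m div k))) 1"
begin

definition zuv :: "nat \<Rightarrow> nat \<Rightarrow> nat \<Rightarrow> poly5" where
  "zuv a s t = z ^ a * u ^ s * v ^ t"

lemma zuv_in_ideal_if_degenerate:
  assumes "\<delta> = 0" "k \<le> a"
  shows "zuv a s t \<in> K"
proof -
  have "z ^ k \<in> K"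
    using binomial \<open>\<delta> = 0\<close> by simp
  then have "(z ^ (a - k) * u ^ s * v ^ t) * z ^ k \<in> K"
    by (rule is_ideal5_mult[OF ideal])
  moreover have "zuv a s t = (z ^ (a - k) * u ^ s * v ^ t) * z ^ k"
    using \<open>k \<le> a\<close> by (simp add: zuv_def power_add[symmetric] mult_ac)
  ultimately show ?thesis
    by simp
qed

lemma zuv_shift_in_span:
  "in_span_mod K (zuv a (s + q * (m div k) * j) (t + p * (m div k) * j)) (zuv a s t)"
proof -
  have "zuv a (s + q * (m div k) * j) (t + p * (m div k) * j)
      = zuv a s t * (u ^ (q * (m div k)) * v ^ (p * (m div k))) ^ j"
    by (simp add: zuv_def power_add power_mult_distrib power_mult[symmetric] mult_ac)
  then show ?thesis
    using in_span_mod_mult_invariant_power[OF ideal invariant_v] by simp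
qed

lemma comparable_if_degenerate:
  assumes "\<delta> = 0" and w: "exp_weight p q m a s t = exp_weight p q m a' s' t'"
  shows "comparable_mod K (zuv a s t) (zuv a' s' t')"
proof (cases "k \<le> a \<or> k \<le> a'")
  case True
  then show ?thesis
  proof
    assume "k \<le> a"
    then show ?thesis
      using comparable_mod_if_mem[OF ideal zuv_in_ideal_if_degenerate[OF \<open>\<delta> = 0\<close>]] by blast
  next
    assume "k \<le> a'"
    then show ?thesis
      using comparable_mod_sym comparable_mod_if_mem[OF ideal zuv_in_ideal_if_degenerate[OF \<open>\<delta> = 0\<close>]]
      by blast
  qed
next
  case False
  then have "a = a'"
    using exp_weight_eq_small_z_exponent[OF w q_eq k_dvd_m] by simp
  have m: "m = k * (m div k)"
    using k_dvd_m by simp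
  from w[folded \<open>a = a'\<close>] show ?thesis
  proof (rule exp_weight_eq_same_z_exponent[OF _ q_eq k_pos m coprime_pq])
    fix j
    assume "s' = s + q * (m div k) * j" "t' = t + p * (m div k) * j"
    then show ?thesis
      using zuv_shift_in_span[of a s j t] \<open>a = a'\<close> by (simp add: comparable_mod_def)
  next
    fix j
    assume "s = s' + q * (m div k) * j" "t = t' + p * (m div k) * j"
    then show ?thesis
      using zuv_shift_in_span[of a s' j t'] \<open>a = a'\<close> by (simp add: comparable_mod_def)
  qed
qed

lemma zk_in_span_uv: "in_span_mod K (z ^ k) (u * v)"
  using binomial by (rule in_span_modI)

lemma uv_in_span_zk: "\<delta> \<noteq> 0 \<Longrightarrow> in_span_mod K (u * v) (z ^ k)"
  using in_span_mod_swap[OF ideal binomial] .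

lemma zuv_normal_form:
  assumes "\<delta> \<noteq> 0"
  obtains a0 s0 t0 where "s0 = 0 \<or> t0 = 0" "exp_weight p q m a0 s0 t0 = exp_weight p q m a s t"
    "in_span_mod K (zuv a s t) (zuv a0 s0 t0)" "in_span_mod K (zuv a0 s0 t0) (zuv a s t)"
proof -
  have assoc: "in_span_mod K (w * (u * v) ^ r) (w * z ^ (k * r))"
    "in_span_mod K (w * z ^ (k * r)) (w * (u * v) ^ r)" for w r
    using in_span_mod_mult_left[OF ideal in_span_mod_power[OF ideal uv_in_span_zk[OF assms]]]
      in_span_mod_mult_left[OF ideal in_span_mod_power[OF ideal zk_in_span_uv]]
    by (simp_all add: power_mult)
  show thesis
  proof (cases "t \<le> s")
    case True
    then obtain e where e: "s = t + e"
      using le_Suc_ex by blast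
    have "zuv a s t = (z ^ a * u ^ e) * (u * v) ^ t" "zuv (a + k * t) e 0 = (z ^ a * u ^ e) * z ^ (k * t)"
      by (simp_all add: zuv_def e power_add power_mult_distrib mult_ac)
    moreover have "exp_weight p q m (a + k * t) e 0 = exp_weight p q m a s t"
      using e q_eq by (simp add: exp_weight_def algebra_simps)
    ultimately show thesis
      using that[of e 0 "a + k * t"] assoc by simp
  next
    case False
    then obtain e where e: "t = s + e"
      using le_Suc_ex nat_le_linear by blast
    have "zuv a s t = (z ^ a * v ^ e) * (u * v) ^ s" "zuv (a + k * s) 0 e = (z ^ a * v ^ e) * z ^ (k * s)"
      by (simp_all add: zuv_def e power_add power_mult_distrib mult_ac)
    moreover have "exp_weight p q m (a + k * s) 0 e = exp_weight p q m a s t"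
      using e q_eq by (simp add: exp_weight_def algebra_simps)
    ultimately show thesis
      using that[of 0 e "a + k * s"] assoc by simp
  qed
qed

lemma comparable_u_only:
  assumes "exp_weight p q m a s 0 = exp_weight p q m a' s' 0"
  shows "comparable_mod K (zuv a s 0) (zuv a' s' 0)"
proof -
  have *: "in_span_mod K (zuv a' s' 0) (zuv a s 0)"
    if w: "exp_weight p q m a s 0 = exp_weight p q m a' s' 0" and "s \<le> s'" for a s a' s'
  proof -
    obtain j where "s' = s + m * j" "a' = a + p * m * j"
      using exp_weight_u_only_eq[OF w \<open>s \<le> s'\<close>] .
    then have "zuv a' s' 0 = zuv a s 0 * (z ^ (p * m) * u ^ m) ^ j"
      by (simp add: zuv_def power_add power_mult_distrib power_mult[symmetric] mult_ac)
    then show ?thesis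
      using in_span_mod_mult_invariant_power[OF ideal invariant_u] by simp
  qed
  show ?thesis
    using *[OF assms] *[OF assms[symmetric]] nat_le_linear[of s s'] by (auto simp: comparable_mod_def)
qed

lemma z_qm_in_span_v_m: "in_span_mod K (z ^ (q * m)) (v ^ m)"
proof -
  have "z ^ (q * m) = z ^ (p * m) * (z ^ k) ^ m"
    by (simp add: q_eq add_mult_distrib power_add power_mult)
  moreover have "in_span_mod K (z ^ (p * m) * (z ^ k) ^ m) (z ^ (p * m) * (u * v) ^ m)"
    using in_span_mod_mult_left[OF ideal in_span_mod_power[OF ideal zk_in_span_uv]] .
  moreover have "z ^ (p * m) * (u * v) ^ m = v ^ m * (z ^ (p * m) * u ^ m)"
    by (simp add: power_mult_distrib mult_ac)
  moreover have "in_span_mod K (v ^ m * (z ^ (p * m) * u ^ m)) (v ^ m * 1)"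
    using in_span_mod_mult_left[OF ideal invariant_u] .
  ultimately show ?thesis
    using in_span_mod_trans[OF ideal] by auto
qed

lemma comparable_v_only:
  assumes "exp_weight p q m a 0 t = exp_weight p q m a' 0 t'"
  shows "comparable_mod K (zuv a 0 t) (zuv a' 0 t')"
proof -
  have *: "in_span_mod K (zuv a 0 t) (zuv a' 0 t')"
    if w: "exp_weight p q m a 0 t = exp_weight p q m a' 0 t'" and "t \<le> t'" for a t a' t'
  proof -
    obtain j where j: "t' = t + m * j" "a = a' + q * m * j"
      using exp_weight_v_only_eq[OF w \<open>t \<le> t'\<close>] .
    have "in_span_mod K (zuv a' 0 t * (z ^ (q * m)) ^ j) (zuv a' 0 t * (v ^ m) ^ j)"
      using in_span_mod_mult_left[OF ideal in_span_mod_power[OF ideal z_qm_in_span_v_m]] .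
    moreover have "zuv a 0 t = zuv a' 0 t * (z ^ (q * m)) ^ j" "zuv a' 0 t' = zuv a' 0 t * (v ^ m) ^ j"
      using j by (simp_all add: zuv_def power_add power_mult[symmetric] mult_ac)
    ultimately show ?thesis
      by simp
  qed
  show ?thesis
    using *[OF assms] *[OF assms[symmetric]] nat_le_linear[of t t'] by (auto simp: comparable_mod_def)
qed

lemma in_span_u_only_v_only:
  assumes "exp_weight p q m a s 0 = exp_weight p q m a' 0 t'"
  shows "in_span_mod K (zuv a s 0) (zuv a' 0 t')"
proof -
  obtain j where j: "s + t' = m * j" "a = a' + k * t' + p * m * j"
    using exp_weight_u_v_eq[OF assms q_eq] .
  define w where "w = z ^ a' * z ^ (p * m * j) * u ^ s"
  have "zuv a s 0 = w * (z ^ k) ^ t'"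
    by (simp add: w_def zuv_def j(2) power_add power_mult mult_ac)
  moreover have "in_span_mod K (w * (z ^ k) ^ t') (w * (u * v) ^ t')"
    using in_span_mod_mult_left[OF ideal in_span_mod_power[OF ideal zk_in_span_uv]] .
  moreover have "w * (u * v) ^ t' = zuv a' 0 t' * (z ^ (p * m) * u ^ m) ^ j"
  proof -
    have "u ^ s * u ^ t' = (u ^ m) ^ j"
      using j(1) by (simp add: power_add[symmetric] power_mult)
    then show ?thesis
      by (simp add: w_def zuv_def power_mult_distrib power_mult[symmetric] mult_ac)
  qed
  moreover have "in_span_mod K (zuv a' 0 t' * (z ^ (p * m) * u ^ m) ^ j) (zuv a' 0 t')"
    using in_span_mod_mult_invariant_power[OF ideal invariant_u] .
  ultimately show ?thesis
    using in_span_mod_trans[OF ideal] by metis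
qed

lemma comparable_normal_forms:
  assumes "s = 0 \<or> t = 0" "s' = 0 \<or> t' = 0" and w: "exp_weight p q m a s t = exp_weight p q m a' s' t'"
  shows "comparable_mod K (zuv a s t) (zuv a' s' t')"
proof -
  consider "t = 0" "t' = 0" | "s = 0" "s' = 0" | "t = 0" "s' = 0" | "s = 0" "t' = 0"
    using assms(1,2) by blast
  then show ?thesis
  proof cases
    case 1
    then show ?thesis
      using comparable_u_only w by simp
  next
    case 2
    then show ?thesis
      using comparable_v_only w by simp
  next
    case 3
    then show ?thesis
      using in_span_u_only_v_only w by (simp add: comparable_mod_def)
  next
    case 4
    then show ?thesis
      using in_span_u_only_v_only w[symmetric] by (simp add: comparable_mod_def)
  qed
qed

lemma comparable_if_nondegenerate:
  assumes "\<delta> \<noteq> 0" and w: "exp_weight p q m a s t = exp_weight p q m a' s' t'"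
  shows "comparable_mod K (zuv a s t) (zuv a' s' t')"
proof -
  obtain a0 s0 t0 where nf: "s0 = 0 \<or> t0 = 0" "exp_weight p q m a0 s0 t0 = exp_weight p q m a s t"
    "in_span_mod K (zuv a s t) (zuv a0 s0 t0)" "in_span_mod K (zuv a0 s0 t0) (zuv a s t)"
    using zuv_normal_form[OF \<open>\<delta> \<noteq> 0\<close>] .
  obtain a0' s0' t0' where nf': "s0' = 0 \<or> t0' = 0" "exp_weight p q m a0' s0' t0' = exp_weight p q m a' s' t'"
    "in_span_mod K (zuv a' s' t') (zuv a0' s0' t0')" "in_span_mod K (zuv a0' s0' t0') (zuv a' s' t')"
    using zuv_normal_form[OF \<open>\<delta> \<noteq> 0\<close>] .
  have "comparable_mod K (zuv a0 s0 t0) (zuv a0' s0' t0')"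
    using comparable_normal_forms nf(1,2) nf'(1,2) w by simp
  then show ?thesis
    using comparable_mod_transfer[OF ideal nf(3,4) nf'(3,4)] by blast
qed

lemma zuv_comparable_if_same_weight:
  "exp_weight p q m a s t = exp_weight p q m a' s' t' \<Longrightarrow> comparable_mod K (zuv a s t) (zuv a' s' t')"
  using comparable_if_degenerate comparable_if_nondegenerate by blast

end

section \<open>Injectivity\<close>

lemma homogeneous_in_ideal_if_terms_in_span:
  assumes K: "is_ideal5 K" and J: "is_ideal5 J" "K \<subseteq> J" and "mono b \<notin> J" "g \<in> J"
    and span: "\<And>a. a \<in> Poly_Mapping.keys g \<Longrightarrow> in_span_mod K (mono a) (mono b)"
  shows "g \<in> K"
proof -
  obtain c where c: "g - const5 c * mono b \<in> K"
    using in_span_mod_if_terms[OF K span] by (auto simp: in_span_mod_def)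
  then have "g - (g - const5 c * mono b) \<in> J"
    using \<open>g \<in> J\<close> \<open>K \<subseteq> J\<close> is_ideal5_diff[OF J(1)] by blast
  then have "const5 c * mono b \<in> J"
    by simp
  then have "c = 0"
    using is_ideal5_const_mult_cancel[OF J(1)] \<open>mono b \<notin> J\<close> by blast
  with c show ?thesis
    by simp
qed

lemma hilb_point_subset_if_monomials_in_span:
  assumes H1: "hilb_point p q m J1" and H2: "hilb_point p q m J2" and "0 < m"
    and span: "\<And>a b. wt p q m a = wt p q m b \<Longrightarrow> mono b \<notin> J1 \<inter> J2 \<Longrightarrow>
      in_span_mod (J1 \<inter> J2) (mono a) (mono b)"
  shows "J1 \<subseteq> J2"
proof
  have J1: "is_ideal5 J1" and K: "is_ideal5 (J1 \<inter> J2)"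
    using H1 H2 by (simp_all add: is_ideal5_Int hilb_point_is_ideal5)
  fix g
  assume g: "g \<in> J1"
  have "weight_comp p q m w g \<in> J1 \<inter> J2" if "w \<in> wt p q m ` Poly_Mapping.keys g" for w
  proof -
    have "w \<in> weights m"
      using that wt_in_weights[OF \<open>0 < m\<close>] by blast
    then obtain b where b: "wt p q m b = w" "mono b \<notin> J1"
      by (rule hilb_point_mono_notin[OF H1])
    show ?thesis
    proof (rule homogeneous_in_ideal_if_terms_in_span[OF K J1 _ b(2)])
      show "weight_comp p q m w g \<in> J1"
        using H1 g by (rule hilb_point_weight_comp)
      fix a
      assume "a \<in> Poly_Mapping.keys (weight_comp p q m w g)"
      then have "wt p q m a = wt p q m b"
        using weight_comp_in_weight_space b(1) by (auto simp: weight_space_def)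
      then show "in_span_mod (J1 \<inter> J2) (mono a) (mono b)"
        using span b(2) by blast
    qed blast
  qed
  then have "(\<Sum>w\<in>wt p q m ` Poly_Mapping.keys g. weight_comp p q m w g) \<in> J1 \<inter> J2"
    by (rule is_ideal5_sum[OF K])
  then show "g \<in> J2"
    by (simp add: sum_weight_comp)
qed

lemma hilb_points_linear_forms:
  assumes "0 < p" "0 < m" and H1: "hilb_point p q m J1" and H2: "hilb_point p q m J2"
    and "eta_neg J1 = eta_neg J2" "eta_pos J1 = eta_pos J2"
  obtains i j where "i = 1 \<or> i = 2" "j = 3 \<or> j = 4"
    "in_span_mod (J1 \<inter> J2) (Var 1) (Var i)" "in_span_mod (J1 \<inter> J2) (Var 2) (Var i)"
    "in_span_mod (J1 \<inter> J2) (Var 3) (Var j)" "in_span_mod (J1 \<inter> J2) (Var 4) (Var j)"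
proof -
  have weights: "(- int p, (-1) mod int m) \<in> weights m" "(int q, 1 mod int m) \<in> weights m"
    using \<open>0 < m\<close> by (simp_all add: weights_def)
  obtain u where "u \<in> {Var 1, Var 2}" "in_span_mod (J1 \<inter> J2) (Var 1) u" "in_span_mod (J1 \<inter> J2) (Var 2) u"
    using hilb_points_common_linear_relation[OF H1 H2 weights(1) Var_in_weight_space(1)[of 1]
        Var_in_weight_space(1)[of 2] hilb_point_X1_or_X2_notin[OF H1 assms(1,2)]
        hilb_point_X1_or_X2_notin[OF H2 assms(1,2)]]
      assms(5) by (auto simp: eta_neg_eq_eta_pair)
  moreover obtain v where "v \<in> {Var 3, Var 4}"
    "in_span_mod (J1 \<inter> J2) (Var 3) v" "in_span_mod (J1 \<inter> J2) (Var 4) v"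
    using hilb_points_common_linear_relation[OF H1 H2 weights(2) Var_in_weight_space(2)[of 3]
        Var_in_weight_space(2)[of 4] hilb_point_X3_or_X4_notin[OF H1 assms(2)]
        hilb_point_X3_or_X4_notin[OF H2 assms(2)]]
      assms(6) by (auto simp: eta_pos_eq_eta_pair)
  ultimately show thesis
    using that by blast
qed

lemma hilb_points_zuv_relations:
  fixes p q m :: nat
  assumes "0 < p" and "p \<le> q" and "coprime p q" and "0 < m"
    and toric: "(q - p) dvd m"
    and H1: "hilb_point p q m J1" and H2: "hilb_point p q m J2"
    and gamma: "gamma p q m J1 = gamma p q m J2"
    and "eta_neg J1 = eta_neg J2" and "eta_pos J1 = eta_pos J2"
  obtains u v \<delta> where "in_span_mod (J1 \<inter> J2) (Var 1) u" "in_span_mod (J1 \<inter> J2) (Var 2) u"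
    "in_span_mod (J1 \<inter> J2) (Var 3) v" "in_span_mod (J1 \<inter> J2) (Var 4) v"
    "zuv_relations (J1 \<inter> J2) (Var 0) u v p q m (q - p) \<delta>"
proof -
  have K: "is_ideal5 (J1 \<inter> J2)"
    using H1 H2 by (simp add: is_ideal5_Int hilb_point_is_ideal5)
  obtain i j where ij: "i = 1 \<or> i = 2" "j = 3 \<or> j = 4" and
    lin: "in_span_mod (J1 \<inter> J2) (Var 1) (Var i)" "in_span_mod (J1 \<inter> J2) (Var 2) (Var i)"
      "in_span_mod (J1 \<inter> J2) (Var 3) (Var j)" "in_span_mod (J1 \<inter> J2) (Var 4) (Var j)"
    using hilb_points_linear_forms[OF \<open>0 < p\<close> \<open>0 < m\<close> H1 H2 assms(9,10)] by blast
  have "Var 0 ^ (q - p) - (Var 1 * Var 4 - Var 2 * Var 3) \<in> J1 \<inter> J2"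
    using hilb_point_hyp_eq[OF H1] hilb_point_hyp_eq[OF H2] by (simp add: hyp_eq_def)
  moreover have "in_span_mod (J1 \<inter> J2) (Var 1 * Var 4 - Var 2 * Var 3) (Var i * Var j)"
    using in_span_mod_diff[OF K in_span_mod_mult[OF K lin(1,4)] in_span_mod_mult[OF K lin(2,3)]] .
  ultimately obtain \<delta> where binomial: "Var 0 ^ (q - p) - const5 \<delta> * (Var i * Var j) \<in> J1 \<inter> J2"
    using in_span_mod_cong[OF K] by (meson in_span_mod_def)
  note invariant = gamma_eq_invariant_in_span_one[OF H1 H2 \<open>0 < m\<close> gamma]
  have "in_span_mod (J1 \<inter> J2) (Var 0 ^ (p * m) * Var i ^ m) 1"
    using invariant Var_monomial_in_weight_space[OF ij, of "p * m" m 0 p q m]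
    by (simp add: exp_weight_def)
  moreover define n where "n = m div (q - p)"
  have "m = (q - p) * n"
    using toric by (simp add: n_def)
  then have "int p * int n - int q * int n = - int m"
    using \<open>p \<le> q\<close> by (simp add: algebra_simps)
  then have "in_span_mod (J1 \<inter> J2) (Var i ^ (q * n) * Var j ^ (p * n)) 1"
    using invariant Var_monomial_in_weight_space[OF ij, of 0 "q * n" "p * n" p q m]
    by (simp add: exp_weight_def)
  moreover have "0 < q - p"
    using toric \<open>0 < m\<close> by (auto intro: gr0I)
  ultimately have "zuv_relations (J1 \<inter> J2) (Var 0) (Var i) (Var j) p q m (q - p) \<delta>"
    using K binomial \<open>p \<le> q\<close> \<open>coprime p q\<close> toric by unfold_locales (simp_all add: n_def)
  with lin show thesis
    by (rule that)
qed

lemma monomials_in_span_mod_Int: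
  fixes p q m :: nat
  assumes "0 < p" and "p \<le> q" and "coprime p q" and "0 < m"
    and toric: "(q - p) dvd m"
    and H1: "hilb_point p q m J1" and H2: "hilb_point p q m J2"
    and "gamma p q m J1 = gamma p q m J2"
    and "eta_neg J1 = eta_neg J2"
    and "eta_pos J1 = eta_pos J2"
    and "wt p q m a = wt p q m b" and "mono b \<notin> J1 \<inter> J2"
  shows "in_span_mod (J1 \<inter> J2) (mono a) (mono b)"
proof -
  have K: "is_ideal5 (J1 \<inter> J2)"
    using H1 H2 by (simp add: is_ideal5_Int hilb_point_is_ideal5)
  obtain u v \<delta> where lin: "in_span_mod (J1 \<inter> J2) (Var 1) u" "in_span_mod (J1 \<inter> J2) (Var 2) u"
      "in_span_mod (J1 \<inter> J2) (Var 3) v" "in_span_mod (J1 \<inter> J2) (Var 4) v"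
    and zuv: "zuv_relations (J1 \<inter> J2) (Var 0) u v p q m (q - p) \<delta>"
    using hilb_points_zuv_relations[OF assms(1-10)] .
  interpret Z: zuv_relations "J1 \<inter> J2" "Var 0" u v p q m "q - p" \<delta>
    by (rule zuv)
  let ?reduced = "\<lambda>a. Z.zuv (Poly_Mapping.lookup a 0) (Poly_Mapping.lookup a 1 + Poly_Mapping.lookup a 2)
    (Poly_Mapping.lookup a 3 + Poly_Mapping.lookup a 4)"
  have reduced: "in_span_mod (J1 \<inter> J2) (mono a) (?reduced a)" "in_span_mod (J1 \<inter> J2) (mono b) (?reduced b)"
    using mono_in_span_mod_reduced[OF K lin] by (simp_all add: Z.zuv_def)
  have "comparable_mod (J1 \<inter> J2) (?reduced a) (?reduced b)"
    using \<open>wt p q m a = wt p q m b\<close> by (intro Z.zuv_comparable_if_same_weight) (simp only: wt_eq_exp_weight)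
  then show ?thesis
    using in_span_mod_if_comparable_reductions[OF K reduced] \<open>mono b \<notin> J1 \<inter> J2\<close> by blast
qed

theorem lemma6p3:
  fixes p q m :: nat
  assumes "0 < p" and "p \<le> q" and "coprime p q" and "0 < m"
    and toric: "(q - p) dvd m"
    and H1: "hilb_point p q m J1" and H2: "hilb_point p q m J2"
    and "gamma p q m J1 = gamma p q m J2"
    and "eta_neg J1 = eta_neg J2"
    and "eta_pos J1 = eta_pos J2"
  shows "J1 = J2"
proof
  show "J1 \<subseteq> J2"
    using hilb_point_subset_if_monomials_in_span[OF H1 H2 \<open>0 < m\<close>] monomials_in_span_mod_Int[OF assms]
    by blast
  show "J2 \<subseteq> J1"
    using hilb_point_subset_if_monomials_in_span[OF H2 H1 \<open>0 < m\<close>]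
      monomials_in_span_mod_Int[OF assms(1-5) H2 H1 assms(8-10)[symmetric]]
    by (simp add: Int_commute)
qed

end
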